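(* Let $m<n$ be natural numbers and let $(A;R)\in\mathcal C$. Suppose there is $C\subseteq A$ with $C\le A$, $|C|=n$, $d(C)=n-1$, and every $(n-1)$-element subset of $C$ independent in $PG(A;R)$. Then for every $(B;R')\in\mathcal C_m$, the pregeometry $PG(A;R)$ is not isomorphic to $PG(B;R')$.
   Context: A set system is a pair $(A;R)$ where $R$ is a set of finite non-empty subsets of $A$; for $X\subseteq A$, $R[X]=\{r\in R:r\subseteq X\}$ and $\delta(X)=|X|-|R[X]|$. $\mathcal C$ is the class of finite set systems with $\delta(X)\ge0$ for all $X\subseteq A$, and $\mathcal C_m$ is the class of members of $\mathcal C$ all of whose sets in $R$ have size at most $m$. $X\le A$ means $\delta(X)\le\delta(X')$ for all $X\subseteq X'\subseteq A$. $d(X)=\min\{\delta(Y):X\subseteq Y\subseteq A\}$, $\mathrm{cl}(X)=\{y:d(X\cup\{y\})=d(X)\}$, and $PG(A;R)$ is the pregeometry $(A,\mathrm{cl})$ with rank function $d$. *)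

theory Defs
  imports Main
begin

definition set_system :: "'a set \<Rightarrow> 'a set set \<Rightarrow> bool" where
  "set_system A R \<longleftrightarrow> (\<forall>r\<in>R. finite r \<and> r \<noteq> {} \<and> r \<subseteq> A)"

definition Rsub :: "'a set set \<Rightarrow> 'a set \<Rightarrow> 'a set set" where
  "Rsub R X = {r \<in> R. r \<subseteq> X}"

definition delta :: "'a set set \<Rightarrow> 'a set \<Rightarrow> int" where
  "delta R X = int (card X) - int (card (Rsub R X))"

definition classC :: "'a set \<Rightarrow> 'a set set \<Rightarrow> bool" where
  "classC A R \<longleftrightarrow> finite A \<and> set_system A R \<and> (\<forall>X. X \<subseteq> A \<longrightarrow> delta R X \<ge> 0)"

definition classCm :: "nat \<Rightarrow> 'a set \<Rightarrow> 'a set set \<Rightarrow> bool" where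
  "classCm m A R \<longleftrightarrow> classC A R \<and> (\<forall>r\<in>R. card r \<le> m)"

definition selfsuff :: "'a set \<Rightarrow> 'a set set \<Rightarrow> 'a set \<Rightarrow> bool" where
  "selfsuff A R X \<longleftrightarrow> X \<subseteq> A \<and> (\<forall>X'. X \<subseteq> X' \<and> X' \<subseteq> A \<longrightarrow> delta R X \<le> delta R X')"

definition dim :: "'a set \<Rightarrow> 'a set set \<Rightarrow> 'a set \<Rightarrow> int" where
  "dim A R X = Min {delta R Y | Y. X \<subseteq> Y \<and> Y \<subseteq> A}"

definition pg_cl :: "'a set \<Rightarrow> 'a set set \<Rightarrow> 'a set \<Rightarrow> 'a set" where
  "pg_cl A R X = {y \<in> A. dim A R (X \<union> {y}) = dim A R X}"

definition pg_indep :: "'a set \<Rightarrow> 'a set set \<Rightarrow> 'a set \<Rightarrow> bool" where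
  "pg_indep A R X \<longleftrightarrow> X \<subseteq> A \<and> (\<forall>x\<in>X. x \<notin> pg_cl A R (X - {x}))"

definition pg_iso :: "'a set \<Rightarrow> 'a set set \<Rightarrow> 'b set \<Rightarrow> 'b set set \<Rightarrow> bool" where
  "pg_iso A R B R' \<longleftrightarrow> (\<exists>f. bij_betw f A B \<and>
      (\<forall>X. X \<subseteq> A \<longrightarrow> f ` (pg_cl A R X) = pg_cl B R' (f ` X)))"

end

theory Submission
  imports Defs
begin

(* Suppose f is an isomorphism PG(A;R) -> PG(B;R') with (B;R') in C_m; we use
   its inverse g : B -> A.  First, C itself is a relation of R: C is self-sufficient of
   predimension |C| - 1, so R[C] is a single relation, and it cannot be a proper subset of C
   because the (|C|-1)-subsets of C are independent.  On the B side, d(C') for C' = g^-1(C)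
   is witnessed by a set V covered by the flats cl(r) of the relations r of R' inside an
   optimal superset of C'; these flats have dimension at most m - 1, and
   |V| - |U R'[F]| <= d(C') (a submodularity chain).  The number |U R[F]| of relations
   lying in a union of flats is computed from the pregeometry alone (inclusion-exclusion over
   intersections of flats, with |R[F]| = |F| - d(F) for a flat F), so it is preserved by g.
   Transported to A, the set g(V) contains the relation C, which lies in none of the image
   flats since they have dimension <= m - 1 < n - 1 = d(C).  Counting C once more gives
   d(C) <= delta(g(V)) <= d(C) - 1, a contradiction. *)

section \<open>Predimension and dimension\<close>

lemma classC_finite: "classC A R \<Longrightarrow> finite A"
  by (simp add: classC_def)

lemma classC_finite_R: "classC A R \<Longrightarrow> finite R"
proof -
  assume c: "classC A R"
  have "R \<subseteq> Pow A" using c unfolding classC_def set_system_def by auto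
  thus ?thesis using c unfolding classC_def by (meson finite_Pow_iff finite_subset)
qed

lemma finite_Rsub: "finite R \<Longrightarrow> finite (Rsub R X)"
  by (simp add: Rsub_def)

lemma card_Rsub_pos: "finite R \<Longrightarrow> r \<in> R \<Longrightarrow> r \<subseteq> X \<Longrightarrow> card (Rsub R X) \<ge> 1"
proof -
  assume "finite R" "r \<in> R" "r \<subseteq> X"
  hence "finite (Rsub R X)" "r \<in> Rsub R X" by (auto simp: finite_Rsub Rsub_def)
  hence "card (Rsub R X) > 0" using card_gt_0_iff by blast
  thus ?thesis by simp
qed

text \<open>The predimension is submodular: relations inside X or Y all lie inside the union.\<close>
lemma delta_submod:
  assumes "finite R" "finite X" "finite Y"
  shows "delta R (X \<union> Y) + delta R (X \<inter> Y) \<le> delta R X + delta R Y"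
proof -
  have sets: "card X + card Y = card (X \<union> Y) + card (X \<inter> Y)"
    using card_Un_Int assms(2,3) by blast
  have rels: "card (Rsub R X) + card (Rsub R Y)
      = card (Rsub R X \<union> Rsub R Y) + card (Rsub R (X \<inter> Y))"
  proof -
    have "Rsub R X \<inter> Rsub R Y = Rsub R (X \<inter> Y)" unfolding Rsub_def by auto
    thus ?thesis using card_Un_Int finite_Rsub assms(1) by metis
  qed
  have "card (Rsub R X \<union> Rsub R Y) \<le> card (Rsub R (X \<union> Y))"
    by (rule card_mono) (auto simp: assms(1) finite_Rsub Rsub_def)
  thus ?thesis using sets rels unfolding delta_def by linarith
qed

lemma delta_antimono_rel: "Q \<subseteq> R \<Longrightarrow> finite R \<Longrightarrow> delta R X \<le> delta Q X"
proof -
  assume "Q \<subseteq> R" "finite R"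
  hence "card (Rsub Q X) \<le> card (Rsub R X)"
    by (intro card_mono) (auto simp: finite_Rsub Rsub_def)
  thus ?thesis unfolding delta_def by linarith
qed

lemma dim_candidates_finite: "finite A \<Longrightarrow> finite {delta R Y | Y. X \<subseteq> Y \<and> Y \<subseteq> A}"
proof -
  assume "finite A"
  moreover have "{delta R Y | Y. X \<subseteq> Y \<and> Y \<subseteq> A} \<subseteq> delta R ` Pow A" by auto
  ultimately show ?thesis by (meson finite_Pow_iff finite_imageI finite_subset)
qed

lemma dim_le: "finite A \<Longrightarrow> X \<subseteq> Y \<Longrightarrow> Y \<subseteq> A \<Longrightarrow> dim A R X \<le> delta R Y"
  unfolding dim_def by (rule Min_le) (auto simp: dim_candidates_finite)

lemma dim_attained:
  assumes "finite A" "X \<subseteq> A"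
  obtains Y where "X \<subseteq> Y" "Y \<subseteq> A" "delta R Y = dim A R X"
proof -
  have "dim A R X \<in> {delta R Y | Y. X \<subseteq> Y \<and> Y \<subseteq> A}"
    unfolding dim_def by (rule Min_in) (use assms dim_candidates_finite in auto)
  thus ?thesis using that by auto
qed

lemma dim_mono: "finite A \<Longrightarrow> X \<subseteq> X' \<Longrightarrow> X' \<subseteq> A \<Longrightarrow> dim A R X \<le> dim A R X'"
  by (metis dim_attained dim_le order_trans)

text \<open>d(empty) = 0, since all predimensions in the class C are nonnegative.\<close>
lemma dim_empty: "classC A R \<Longrightarrow> dim A R {} = 0"
proof -
  assume c: "classC A R"
  obtain Y where Y: "Y \<subseteq> A" "delta R Y = dim A R {}"
    using dim_attained[OF classC_finite[OF c], of "{}" R] by auto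
  have "0 \<le> delta R Y" using c Y(1) unfolding classC_def by blast
  moreover have "dim A R {} \<le> delta R {}" by (rule dim_le[OF classC_finite[OF c]]) simp_all
  moreover have "delta R {} \<le> 0" unfolding delta_def by simp
  ultimately show ?thesis using Y by linarith
qed

lemma dim_insert_le:
  assumes c: "classC A R" and "X \<subseteq> A" "y \<in> A"
  shows "dim A R (insert y X) \<le> dim A R X + 1"
proof -
  have fA: "finite A" using classC_finite[OF c] .
  obtain W where W: "X \<subseteq> W" "W \<subseteq> A" "delta R W = dim A R X"
    by (rule dim_attained[OF fA assms(2)])
  have "card (insert y W) \<le> card W + 1" by (simp add: card_insert_if finite_subset[OF W(2) fA])
  moreover have "card (Rsub R W) \<le> card (Rsub R (insert y W))"
    by (rule card_mono) (auto simp: classC_finite_R[OF c] finite_Rsub Rsub_def)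
  ultimately have "delta R (insert y W) \<le> delta R W + 1" unfolding delta_def by linarith
  moreover have "dim A R (insert y X) \<le> delta R (insert y W)"
    using W assms(3) fA by (intro dim_le) auto
  ultimately show ?thesis using W by simp
qed

section \<open>Closure and flats\<close>

lemma subset_cl: "X \<subseteq> A \<Longrightarrow> X \<subseteq> pg_cl A R X"
  unfolding pg_cl_def by (auto simp: insert_absorb)

lemma cl_subset: "pg_cl A R X \<subseteq> A"
  unfolding pg_cl_def by auto

lemma dim_insert:
  assumes c: "classC A R" and X: "X \<subseteq> A" and y: "y \<in> A"
  shows "dim A R (insert y X) = dim A R X + (if y \<in> pg_cl A R X then 0 else 1)"
proof -
  have "dim A R X \<le> dim A R (insert y X)"
    by (rule dim_mono[OF classC_finite[OF c]]) (use X y in auto)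
  thus ?thesis using dim_insert_le[OF c X y] y unfolding pg_cl_def by auto
qed

lemma optimal_subset_cl:
  assumes c: "classC A R" and "X \<subseteq> W" "W \<subseteq> A" "delta R W = dim A R X"
  shows "W \<subseteq> pg_cl A R X"
proof
  fix w assume w: "w \<in> W"
  have "dim A R (X \<union> {w}) \<le> delta R W"
    using dim_le[OF classC_finite[OF c]] assms(2,3) w by auto
  moreover have "dim A R X \<le> dim A R (X \<union> {w})"
    by (rule dim_mono[OF classC_finite[OF c]]) (use assms(2,3) w in auto)
  ultimately show "w \<in> pg_cl A R X" unfolding pg_cl_def using assms(3,4) w by auto
qed

lemma optimal_Un:
  assumes c: "classC A R"
    and W1: "X \<subseteq> W1" "W1 \<subseteq> A" "delta R W1 = dim A R X"
    and W2: "X \<subseteq> W2" "W2 \<subseteq> A" "delta R W2 = dim A R X"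
  shows "delta R (W1 \<union> W2) = dim A R X"
proof -
  have fA: "finite A" using classC_finite[OF c] .
  have "delta R (W1 \<union> W2) + delta R (W1 \<inter> W2) \<le> delta R W1 + delta R W2"
    using delta_submod[OF classC_finite_R[OF c]] finite_subset[OF W1(2) fA]
      finite_subset[OF W2(2) fA] by blast
  moreover have "dim A R X \<le> delta R (W1 \<inter> W2)" by (rule dim_le[OF fA]) (use W1 W2 in auto)
  moreover have "dim A R X \<le> delta R (W1 \<union> W2)" by (rule dim_le[OF fA]) (use W1 W2 in auto)
  ultimately show ?thesis using W1 W2 by linarith
qed

text \<open>The closure of X is the largest optimal superset of X; in particular it is optimal.\<close>
lemma delta_cl:
  assumes c: "classC A R" and X: "X \<subseteq> A"
  shows "delta R (pg_cl A R X) = dim A R X"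
proof -
  have fA: "finite A" using classC_finite[OF c] .
  define Opt where "Opt = {W. X \<subseteq> W \<and> W \<subseteq> A \<and> delta R W = dim A R X}"
  have "finite Opt" by (rule finite_subset[of _ "Pow A"]) (auto simp: Opt_def fA)
  moreover have "Opt \<noteq> {}"
  proof -
    obtain Y where "X \<subseteq> Y" "Y \<subseteq> A" "delta R Y = dim A R X" by (rule dim_attained[OF fA X])
    thus ?thesis unfolding Opt_def by blast
  qed
  ultimately have "Max (card ` Opt) \<in> card ` Opt" by simp
  then obtain W0 where W0: "W0 \<in> Opt" "card W0 = Max (card ` Opt)" by auto
  have largest: "card W \<le> card W0" if "W \<in> Opt" for W
    using W0(2) \<open>finite Opt\<close> that by simp
  have "pg_cl A R X \<subseteq> W0"
  proof
    fix y assume y: "y \<in> pg_cl A R X"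
    hence yA: "y \<in> A" and dy: "dim A R (insert y X) = dim A R X" unfolding pg_cl_def by auto
    have "insert y X \<subseteq> A" using X yA by simp
    then obtain Wy where Wy: "insert y X \<subseteq> Wy" "Wy \<subseteq> A" "delta R Wy = dim A R (insert y X)"
      by (rule dim_attained[OF fA])
    have "W0 \<union> Wy \<in> Opt" using optimal_Un[OF c] W0 Wy dy unfolding Opt_def by auto
    hence "finite (W0 \<union> Wy)" "card (W0 \<union> Wy) \<le> card W0"
      using largest finite_subset[OF _ fA] unfolding Opt_def by auto
    hence "W0 = W0 \<union> Wy" using card_seteq[of "W0 \<union> Wy" W0] by blast
    thus "y \<in> W0" using Wy by auto
  qed
  with optimal_subset_cl[OF c] W0 have "pg_cl A R X = W0" unfolding Opt_def by blast
  thus ?thesis using W0 unfolding Opt_def by simp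
qed

lemma dim_cl:
  assumes c: "classC A R" and X: "X \<subseteq> A"
  shows "dim A R (pg_cl A R X) = dim A R X"
proof -
  have fA: "finite A" using classC_finite[OF c] .
  have "dim A R X \<le> dim A R (pg_cl A R X)" by (rule dim_mono[OF fA subset_cl[OF X] cl_subset])
  moreover have "dim A R (pg_cl A R X) \<le> delta R (pg_cl A R X)"
    by (rule dim_le[OF fA order_refl cl_subset])
  ultimately show ?thesis using delta_cl[OF c X] by linarith
qed

text \<open>Closure is monotone (the union of the two closures is optimal for the larger set).\<close>
lemma cl_mono:
  assumes c: "classC A R" and "X \<subseteq> Y" "Y \<subseteq> A"
  shows "pg_cl A R X \<subseteq> pg_cl A R Y"
proof -
  have fA: "finite A" using classC_finite[OF c] .
  define P where "P = pg_cl A R X"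
  define P' where "P' = pg_cl A R Y"
  have PA: "P \<subseteq> A" "P' \<subseteq> A" unfolding P_def P'_def by (auto simp: cl_subset)
  have XP: "X \<subseteq> P" "Y \<subseteq> P'"
    unfolding P_def P'_def using subset_cl[of X A R] subset_cl[of Y A R] assms by auto
  have "delta R (P \<union> P') + delta R (P \<inter> P') \<le> delta R P + delta R P'"
    using delta_submod[OF classC_finite_R[OF c]] finite_subset[OF _ fA] PA by blast
  moreover have "delta R P = dim A R X" "delta R P' = dim A R Y"
    unfolding P_def P'_def using delta_cl[OF c] assms by auto
  moreover have "dim A R X \<le> delta R (P \<inter> P')" by (rule dim_le[OF fA]) (use XP PA assms in auto)
  moreover have "dim A R Y \<le> delta R (P \<union> P')" by (rule dim_le[OF fA]) (use XP PA in auto)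
  ultimately have "delta R (P \<union> P') = dim A R Y" by linarith
  hence "P \<union> P' \<subseteq> P'" using optimal_subset_cl[OF c, of Y "P \<union> P'"] XP PA P'_def by auto
  thus ?thesis unfolding P_def P'_def by auto
qed

definition pg_flat :: "'a set \<Rightarrow> 'a set set \<Rightarrow> 'a set \<Rightarrow> bool" where
  "pg_flat A R F \<longleftrightarrow> F \<subseteq> A \<and> pg_cl A R F = F"

lemma flat_cl:
  assumes c: "classC A R" and X: "X \<subseteq> A"
  shows "pg_flat A R (pg_cl A R X)"
proof -
  have larger: "pg_cl A R X \<subseteq> pg_cl A R (pg_cl A R X)" by (rule subset_cl[OF cl_subset])
  have "X \<subseteq> pg_cl A R (pg_cl A R X)" using subset_cl[OF X, of R] larger by (rule order_trans)
  moreover have "delta R (pg_cl A R (pg_cl A R X)) = dim A R X"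
    using delta_cl[OF c cl_subset] dim_cl[OF c X] by simp
  ultimately have "pg_cl A R (pg_cl A R X) \<subseteq> pg_cl A R X"
    by (rule optimal_subset_cl[OF c _ cl_subset])
  thus ?thesis unfolding pg_flat_def using cl_subset[of A R X] larger by (simp add: subset_antisym)
qed

lemma flat_Inter:
  assumes c: "classC A R" and "S \<noteq> {}" "\<forall>F\<in>S. pg_flat A R F"
  shows "pg_flat A R (\<Inter>S)"
proof -
  have sub: "\<Inter>S \<subseteq> A" using assms(2,3) unfolding pg_flat_def by blast
  have "pg_cl A R (\<Inter>S) \<subseteq> F" if "F \<in> S" for F
    using cl_mono[OF c, of "\<Inter>S" F] that assms(3) unfolding pg_flat_def by blast
  thus ?thesis using sub subset_cl[OF sub] unfolding pg_flat_def by blast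
qed

lemma flat_card_Rsub:
  "classC A R \<Longrightarrow> pg_flat A R F \<Longrightarrow> int (card (Rsub R F)) = int (card F) - dim A R F"
  unfolding pg_flat_def using delta_cl[of A R F] unfolding delta_def by simp

section \<open>Independent sets\<close>

text \<open>An independent set has full dimension: each of its points raises d by one.\<close>
lemma indep_dim:
  assumes c: "classC A R" and ind: "pg_indep A R D"
  shows "dim A R D = int (card D)"
proof -
  have DA: "D \<subseteq> A" using ind unfolding pg_indep_def by auto
  have "dim A R Z = int (card Z)" if "finite Z" "Z \<subseteq> D" for Z
    using that
  proof (induction Z rule: finite_induct)
    case empty then show ?case using dim_empty[OF c] by simp
  next
    case (insert y Z)
    have yD: "y \<in> D" and ZD: "Z \<subseteq> D - {y}" using insert by auto
    have "pg_cl A R Z \<subseteq> pg_cl A R (D - {y})" using cl_mono[OF c ZD] DA by auto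
    moreover have "y \<notin> pg_cl A R (D - {y})" using ind yD unfolding pg_indep_def by auto
    ultimately have "y \<notin> pg_cl A R Z" by blast
    hence "dim A R (insert y Z) = dim A R Z + 1" using dim_insert[OF c, of Z y] ZD DA yD by auto
    thus ?case using insert by simp
  qed
  thus ?thesis using finite_subset[OF DA classC_finite[OF c]] by simp
qed

lemma selfsuff_circuit_in_R:
  assumes c: "classC A R" and ss: "selfsuff A R C"
    and dC: "dim A R C = int (card C) - 1"
    and ind: "\<And>x. x \<in> C \<Longrightarrow> pg_indep A R (C - {x})"
  shows "C \<in> R"
proof (rule ccontr)
  assume notR: "C \<notin> R"
  have fA: "finite A" and fR: "finite R" using c by (auto simp: classC_finite classC_finite_R)
  have CA: "C \<subseteq> A" using ss unfolding selfsuff_def by blast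
  have fC: "finite C" using finite_subset[OF CA fA] .
  have "delta R C = dim A R C"
  proof -
    obtain Y where Y: "C \<subseteq> Y" "Y \<subseteq> A" "delta R Y = dim A R C"
      by (rule dim_attained[OF fA CA])
    have "delta R C \<le> delta R Y" using ss Y(1,2) unfolding selfsuff_def by blast
    thus ?thesis using Y(3) dim_le[OF fA order_refl CA, of R] by linarith
  qed
  hence "card (Rsub R C) = 1" using dC unfolding delta_def by simp
  then obtain r where "Rsub R C = {r}" using card_1_singletonE by blast
  hence r: "r \<in> R" "r \<subseteq> C" "r \<noteq> C" using notR unfolding Rsub_def by auto
  then obtain x where x: "x \<in> C" "x \<notin> r" by blast
  have "r \<subseteq> C - {x}" using r(2) x(2) by blast
  hence "card (Rsub R (C - {x})) \<ge> 1" by (rule card_Rsub_pos[OF fR r(1)])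
  moreover have "int (card (C - {x})) = int (card C) - 1"
  proof -
    have "card C > 0" using x(1) fC card_gt_0_iff by blast
    thus ?thesis using x(1) fC by (simp add: of_nat_diff)
  qed
  moreover have "dim A R (C - {x}) \<le> delta R (C - {x})" by (rule dim_le[OF fA order_refl]) (use CA in blast)
  ultimately have "dim A R (C - {x}) < int (card (C - {x}))" unfolding delta_def by linarith
  thus False using indep_dim[OF c ind[OF x(1)]] by simp
qed


section \<open>Isomorphisms of pregeometries\<close>

definition pg_iso_map :: "('a \<Rightarrow> 'b) \<Rightarrow> 'a set \<Rightarrow> 'a set set \<Rightarrow> 'b set \<Rightarrow> 'b set set \<Rightarrow> bool" where
  "pg_iso_map f A R B R' \<longleftrightarrow>
     bij_betw f A B \<and> (\<forall>X. X \<subseteq> A \<longrightarrow> f ` pg_cl A R X = pg_cl B R' (f ` X))"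

lemma pg_iso_inverse:
  assumes "pg_iso A R B R'"
  obtains g where "pg_iso_map g B R' A R"
proof -
  obtain f where bij: "bij_betw f A B"
    and fcl: "\<forall>X. X \<subseteq> A \<longrightarrow> f ` pg_cl A R X = pg_cl B R' (f ` X)"
    using assms unfolding pg_iso_def by blast
  define g where "g = the_inv_into A f"
  have inj: "inj_on f A" and fA: "f ` A = B" using bij by (auto simp: bij_betw_def)
  have gbij: "bij_betw g B A" unfolding g_def by (rule bij_betw_the_inv_into[OF bij])
  have gf: "g ` f ` Z = Z" if "Z \<subseteq> A" for Z
    using that the_inv_into_f_f[OF inj] unfolding g_def by (force simp: image_image)
  have fg: "f ` g ` Y = Y" if "Y \<subseteq> B" for Y
    using that f_the_inv_into_f[OF inj] fA unfolding g_def by (force simp: image_image)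
  have "g ` pg_cl B R' Y = pg_cl A R (g ` Y)" if Y: "Y \<subseteq> B" for Y
  proof -
    have gY: "g ` Y \<subseteq> A" using gbij Y unfolding bij_betw_def by blast
    have "pg_cl B R' Y = f ` pg_cl A R (g ` Y)" using fcl gY fg[OF Y] by simp
    thus ?thesis using gf[OF cl_subset] by simp
  qed
  thus ?thesis using that gbij unfolding pg_iso_map_def by blast
qed

text \<open>Isomorphisms preserve dimension, since d is built up point by point from closure.\<close>
lemma iso_dim:
  assumes cA: "classC A R" and cB: "classC B R'" and iso: "pg_iso_map f A R B R'"
    and X: "X \<subseteq> A"
  shows "dim B R' (f ` X) = dim A R X"
proof -
  have inj: "inj_on f A" and fA: "f ` A = B" and fcl: "\<forall>X. X \<subseteq> A \<longrightarrow> f ` pg_cl A R X = pg_cl B R' (f ` X)"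
    using iso unfolding pg_iso_map_def bij_betw_def by auto
  have "dim B R' (f ` Z) = dim A R Z" if "finite Z" "Z \<subseteq> A" for Z
    using that
  proof (induction Z rule: finite_induct)
    case empty then show ?case using dim_empty[OF cA] dim_empty[OF cB] by simp
  next
    case (insert y Z)
    have yA: "y \<in> A" and ZA: "Z \<subseteq> A" using insert by auto
    have "(f y \<in> pg_cl B R' (f ` Z)) = (y \<in> pg_cl A R Z)"
      using fcl ZA inj_on_image_mem_iff[OF inj yA cl_subset] by metis
    moreover have "f y \<in> B" "f ` Z \<subseteq> B" using yA ZA fA by auto
    ultimately show ?case using dim_insert[OF cA ZA yA] dim_insert[OF cB] insert by simp
  qed
  thus ?thesis using X finite_subset[OF X classC_finite[OF cA]] by blast
qed

lemma iso_flat: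
  assumes iso: "pg_iso_map f A R B R'" and F: "pg_flat A R F"
  shows "pg_flat B R' (f ` F)"
proof -
  have FA: "F \<subseteq> A" and clF: "pg_cl A R F = F" using F unfolding pg_flat_def by auto
  have "f ` F \<subseteq> B" using iso FA unfolding pg_iso_map_def bij_betw_def by blast
  moreover have "pg_cl B R' (f ` F) = f ` F" using iso FA clF unfolding pg_iso_map_def by metis
  ultimately show ?thesis unfolding pg_flat_def by blast
qed

text \<open>Inclusion-exclusion: the number of relations lying in a union of a finite family of
  sets is determined by the numbers of relations in the nonempty intersections.\<close>
lemma card_Union_Rsub_eq:
  assumes "finite I" "finite R1" "finite R2"
    and "\<And>S. S \<subseteq> I \<Longrightarrow> S \<noteq> {} \<Longrightarrow>
           card (Rsub R1 (\<Inter> (F ` S))) = card (Rsub R2 (\<Inter> (G ` S)))"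
  shows "card (\<Union>i\<in>I. Rsub R1 (F i)) = card (\<Union>i\<in>I. Rsub R2 (G i))"
  using assms(1,4)
proof (induction I arbitrary: F G rule: finite_induct)
  case empty then show ?case by simp
next
  case (insert j I)
  note h = insert.prems
  have union: "card (\<Union>i\<in>I. Rsub R1 (F i)) = card (\<Union>i\<in>I. Rsub R2 (G i))"
    using insert.IH[of F G] h by blast
  have single: "card (Rsub R1 (F j)) = card (Rsub R2 (G j))" using h[of "{j}"] by simp
  have meet: "card (\<Union>i\<in>I. Rsub R1 (F j \<inter> F i)) = card (\<Union>i\<in>I. Rsub R2 (G j \<inter> G i))"
  proof (rule insert.IH)
    fix S assume S: "S \<subseteq> I" "S \<noteq> {}"
    have "\<Inter> ((\<lambda>i. F j \<inter> F i) ` S) = \<Inter> (F ` insert j S)"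
      "\<Inter> ((\<lambda>i. G j \<inter> G i) ` S) = \<Inter> (G ` insert j S)" using S by auto
    thus "card (Rsub R1 (\<Inter> ((\<lambda>i. F j \<inter> F i) ` S))) = card (Rsub R2 (\<Inter> ((\<lambda>i. G j \<inter> G i) ` S)))"
      using h[of "insert j S"] S by auto
  qed
  have "Rsub R1 (F j) \<inter> (\<Union>i\<in>I. Rsub R1 (F i)) = (\<Union>i\<in>I. Rsub R1 (F j \<inter> F i))"
    "Rsub R2 (G j) \<inter> (\<Union>i\<in>I. Rsub R2 (G i)) = (\<Union>i\<in>I. Rsub R2 (G j \<inter> G i))"
    unfolding Rsub_def by auto
  moreover have "finite (\<Union>i\<in>I. Rsub R1 (F i))" "finite (Rsub R1 (F j))"
    "finite (\<Union>i\<in>I. Rsub R2 (G i))" "finite (Rsub R2 (G j))"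
    using insert.hyps assms(2,3) finite_Rsub by auto
  ultimately show ?case using card_Un_Int union single meet by (metis UN_insert add_right_cancel)
qed

text \<open>Consequently an isomorphism preserves the number of relations in a union of flats:
  intersections of flats are flats, and a flat F carries |F| - d(F) relations.\<close>
lemma iso_card_Union_Rsub:
  assumes cA: "classC A R" and cB: "classC B R'" and iso: "pg_iso_map f A R B R'"
    and "finite \<F>" "\<forall>F\<in>\<F>. pg_flat A R F"
  shows "card (\<Union>F\<in>\<F>. Rsub R F) = card (\<Union>F\<in>\<F>. Rsub R' (f ` F))"
proof (rule card_Union_Rsub_eq[OF assms(4) classC_finite_R[OF cA] classC_finite_R[OF cB]])
  fix S assume S: "S \<subseteq> \<F>" "S \<noteq> {}"
  have inj: "inj_on f A" using iso unfolding pg_iso_map_def bij_betw_def by auto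
  have flat: "pg_flat A R (\<Inter>S)" using flat_Inter[OF cA] S assms(5) by blast
  hence XA: "\<Inter>S \<subseteq> A" unfolding pg_flat_def by blast
  obtain j where "j \<in> S" using S by blast
  moreover have "\<forall>F\<in>S. F \<subseteq> A" using S assms(5) unfolding pg_flat_def by blast
  ultimately have image: "f ` \<Inter>S = \<Inter> ((\<lambda>F. f ` F) ` S)"
    using image_INT[OF inj, of S "\<lambda>F. F" j] by simp
  have flat': "pg_flat B R' (f ` \<Inter>S)" by (rule iso_flat[OF iso flat])
  have "int (card (Rsub R (\<Inter>S))) = int (card (Rsub R' (f ` \<Inter>S)))"
    using flat_card_Rsub[OF cA flat] flat_card_Rsub[OF cB flat'] iso_dim[OF cA cB iso XA]
      card_image[OF inj_on_subset[OF inj XA]] by simp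
  thus "card (Rsub R (\<Inter> ((\<lambda>F. F) ` S))) = card (Rsub R' (\<Inter> ((\<lambda>F. f ` F) ` S)))"
    using image by simp
qed

section \<open>The side of the class C_m\<close>

lemma delta_Un_cl:
  assumes c: "classC A R" and Q: "Q \<subseteq> R" and X: "X \<subseteq> A" and r: "r \<subseteq> X"
    and RQ: "Rsub R (pg_cl A R r) \<subseteq> Q"
  shows "delta Q (X \<union> pg_cl A R r) \<le> delta Q X"
proof -
  let ?F = "pg_cl A R r"
  have fA: "finite A" and fR: "finite R" using c by (auto simp: classC_finite classC_finite_R)
  have rA: "r \<subseteq> A" using r X by blast
  have "delta Q (X \<union> ?F) + delta Q (X \<inter> ?F) \<le> delta Q X + delta Q ?F"
    by (rule delta_submod[OF finite_subset[OF Q fR] finite_subset[OF X fA] finite_subset[OF cl_subset fA]])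
  moreover have "delta Q ?F = dim A R r"
  proof -
    have "Rsub Q ?F = Rsub R ?F" using RQ Q unfolding Rsub_def by blast
    thus ?thesis using delta_cl[OF c rA] unfolding delta_def by simp
  qed
  moreover have "dim A R r \<le> delta Q (X \<inter> ?F)"
  proof -
    have "r \<subseteq> X \<inter> ?F" using r subset_cl[OF rA] by blast
    hence "dim A R r \<le> dim A R (X \<inter> ?F)" by (rule dim_mono[OF fA]) (use X in blast)
    also have "\<dots> \<le> delta R (X \<inter> ?F)" by (rule dim_le[OF fA order_refl]) (use X in blast)
    also have "\<dots> \<le> delta Q (X \<inter> ?F)" by (rule delta_antimono_rel[OF Q fR])
    finally show ?thesis .
  qed
  ultimately show ?thesis by linarith
qed

lemma delta_Un_cls:
  assumes c: "classC A R" and Q: "Q \<subseteq> R" and Y: "Y \<subseteq> A" and "finite J"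
    and J: "\<forall>r\<in>J. r \<subseteq> Y \<and> Rsub R (pg_cl A R r) \<subseteq> Q"
  shows "delta Q (Y \<union> (\<Union>r\<in>J. pg_cl A R r)) \<le> delta Q Y"
  using \<open>finite J\<close> J
proof (induction J rule: finite_induct)
  case empty then show ?case by simp
next
  case (insert r J)
  define X where "X = Y \<union> (\<Union>r\<in>J. pg_cl A R r)"
  have "X \<subseteq> A" unfolding X_def using Y by (simp add: cl_subset UN_least)
  moreover have "r \<subseteq> X" "Rsub R (pg_cl A R r) \<subseteq> Q" using insert.prems unfolding X_def by auto
  ultimately have step: "delta Q (X \<union> pg_cl A R r) \<le> delta Q X" by (rule delta_Un_cl[OF c Q])
  have IH: "delta Q X \<le> delta Q Y" unfolding X_def using insert.IH insert.prems by blast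
  have "Y \<union> (\<Union>r\<in>insert r J. pg_cl A R r) = X \<union> pg_cl A R r" unfolding X_def by auto
  thus ?case using step IH by simp
qed

text \<open>In a structure of C_m the dimension of any X is witnessed, up to relations, by
  finitely many flats of dimension at most m - 1 (the closures of the relations inside an
  optimal superset Y of X): the set V = Y together with these flats has |V| minus the
  number of relations inside the flats at most d(X).\<close>
lemma small_flat_cover:
  assumes cm: "classCm m B R'" and X: "X \<subseteq> B"
  obtains V \<F> where "X \<subseteq> V" "V \<subseteq> B" "finite \<F>"
    "\<forall>F\<in>\<F>. pg_flat B R' F \<and> F \<subseteq> V \<and> dim B R' F \<le> int m - 1"
    "int (card V) - int (card (\<Union>F\<in>\<F>. Rsub R' F)) \<le> dim B R' X"
proof -
  have c: "classC B R'" and small: "\<forall>r\<in>R'. card r \<le> m" using cm unfolding classCm_def by auto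
  have fB: "finite B" and fR: "finite R'" using c by (auto simp: classC_finite classC_finite_R)
  obtain Y where Y: "X \<subseteq> Y" "Y \<subseteq> B" "delta R' Y = dim B R' X" by (rule dim_attained[OF fB X])
  define Q where "Q = Rsub R' Y"
  define \<F> where "\<F> = pg_cl B R' ` Q"
  define Q' where "Q' = (\<Union>F\<in>\<F>. Rsub R' F)"
  define V where "V = Y \<union> (\<Union>r\<in>Q. pg_cl B R' r)"
  have QY: "r \<subseteq> Y" "r \<in> R'" if "r \<in> Q" for r using that unfolding Q_def Rsub_def by auto
  have Q'R: "Q' \<subseteq> R'" unfolding Q'_def Rsub_def by blast
  have "delta Q' V \<le> delta Q' Y"
    unfolding V_def by (rule delta_Un_cls[OF c Q'R Y(2)]) (auto simp: Q_def finite_Rsub fR Q'_def \<F>_def QY)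
  also have "\<dots> \<le> delta R' Y"
  proof -
    have "Rsub R' Y \<subseteq> Rsub Q' Y"
    proof
      fix r assume r: "r \<in> Rsub R' Y"
      hence rQ: "r \<in> Q" and rB: "r \<subseteq> B" using Y(2) unfolding Q_def Rsub_def by auto
      have "r \<in> Rsub R' (pg_cl B R' r)" using QY(2)[OF rQ] subset_cl[OF rB] unfolding Rsub_def by simp
      hence "r \<in> Q'" using rQ unfolding Q'_def \<F>_def by blast
      thus "r \<in> Rsub Q' Y" using r unfolding Rsub_def by simp
    qed
    hence "card (Rsub R' Y) \<le> card (Rsub Q' Y)"
      by (rule card_mono[OF finite_Rsub[OF finite_subset[OF Q'R fR]]])
    thus ?thesis unfolding delta_def by simp
  qed
  also have "delta Q' V = int (card V) - int (card Q')"
  proof -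
    have "Rsub Q' V = Q'" unfolding Q'_def \<F>_def V_def Rsub_def by auto
    thus ?thesis unfolding delta_def by simp
  qed
  finally have bound: "int (card V) - int (card Q') \<le> dim B R' X" using Y(3) by simp
  have "pg_flat B R' F \<and> F \<subseteq> V \<and> dim B R' F \<le> int m - 1" if "F \<in> \<F>" for F
  proof -
    have "F \<in> pg_cl B R' ` Q" using that unfolding \<F>_def .
    then obtain r where r: "r \<in> Q" "F = pg_cl B R' r" by blast
    have rB: "r \<subseteq> B" using QY[OF r(1)] Y(2) by blast
    have "dim B R' r \<le> delta R' r" by (rule dim_le[OF fB order_refl rB])
    also have "\<dots> \<le> int (card r) - 1"
      using card_Rsub_pos[OF fR QY(2)[OF r(1)] order_refl] unfolding delta_def by simp
    also have "\<dots> \<le> int m - 1" using small QY(2)[OF r(1)] by force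
    finally show ?thesis using flat_cl[OF c rB] dim_cl[OF c rB] r unfolding V_def by auto
  qed
  moreover have "X \<subseteq> V" "V \<subseteq> B" "finite \<F>"
    using Y cl_subset[of B R'] unfolding V_def \<F>_def Q_def by (auto simp: finite_Rsub fR)
  ultimately show ?thesis using that bound unfolding Q'_def by blast
qed

section \<open>The side of the structure containing C\<close>

text \<open>A relation C inside W cannot lie in a set of smaller dimension, so it is counted on
  top of the relations inside finitely many such sets G i \<subseteq> W; this lowers the bound on d(C)
  by one.\<close>
lemma relation_outside_family:
  assumes c: "classC A R" and C: "C \<in> R" "C \<subseteq> W" and W: "W \<subseteq> A" and "finite I"
    and G: "\<forall>i\<in>I. G i \<subseteq> W \<and> dim A R (G i) < dim A R C"
  shows "dim A R C \<le> int (card W) - int (card (\<Union>i\<in>I. Rsub R (G i))) - 1"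
proof -
  let ?U = "\<Union>i\<in>I. Rsub R (G i)"
  have fA: "finite A" and fR: "finite R" using c by (auto simp: classC_finite classC_finite_R)
  have sub: "insert C ?U \<subseteq> Rsub R W" using C G unfolding Rsub_def by blast
  have "C \<notin> ?U"
  proof
    assume "C \<in> ?U"
    then obtain i where i: "i \<in> I" "C \<subseteq> G i" unfolding Rsub_def by blast
    have "dim A R C \<le> dim A R (G i)" by (rule dim_mono[OF fA i(2)]) (use i(1) G W in blast)
    thus False using G i(1) by fastforce
  qed
  hence "card ?U + 1 = card (insert C ?U)"
    using finite_subset[OF sub finite_Rsub[OF fR]] by simp
  also have "\<dots> \<le> card (Rsub R W)" by (rule card_mono[OF finite_Rsub[OF fR] sub])
  finally have "int (card ?U) + 1 \<le> int (card (Rsub R W))" by linarith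
  moreover have "dim A R C \<le> delta R W" by (rule dim_le[OF fA C(2) W])
  ultimately show ?thesis unfolding delta_def by linarith
qed

theorem mainTheorem11:
  fixes m n :: nat and A :: "'a set" and R :: "'a set set" and C :: "'a set"
  assumes "m < n"
    and "classC A R"
    and "C \<subseteq> A" and "selfsuff A R C" and "card C = n"
    and "dim A R C = int n - 1"
    and "\<forall>D. D \<subseteq> C \<and> card D = n - 1 \<longrightarrow> pg_indep A R D"
  shows "\<forall>(B :: 'b set) (R' :: 'b set set). classCm m B R' \<longrightarrow> \<not> pg_iso A R B R'"
proof (intro allI impI notI)
  fix B :: "'b set" and R' :: "'b set set"
  assume cm: "classCm m B R'" and iso: "pg_iso A R B R'"
  obtain g where g: "pg_iso_map g B R' A R" by (rule pg_iso_inverse[OF iso])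
  have cA: "classC A R" and cB: "classC B R'" using assms(2) cm unfolding classCm_def by auto
  have inj: "inj_on g B" and gB: "g ` B = A" using g unfolding pg_iso_map_def bij_betw_def by auto
  have "C \<in> R"
  proof (rule selfsuff_circuit_in_R[OF cA assms(4)])
    show "dim A R C = int (card C) - 1" using assms(5,6) by simp
    fix x assume "x \<in> C"
    thus "pg_indep A R (C - {x})" using assms(3,5,7) finite_subset[OF assms(3) classC_finite[OF cA]] by simp
  qed
  obtain C' where C': "C' \<subseteq> B" "C = g ` C'" using assms(3) gB by (metis subset_image_iff)
  have dimC': "dim B R' C' = int n - 1" using iso_dim[OF cB cA g C'(1)] C'(2) assms(6) by simp
  obtain V \<F> where V: "C' \<subseteq> V" "V \<subseteq> B" "finite \<F>"
      and \<F>: "\<forall>F\<in>\<F>. pg_flat B R' F \<and> F \<subseteq> V \<and> dim B R' F \<le> int m - 1"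
      and bound: "int (card V) - int (card (\<Union>F\<in>\<F>. Rsub R' F)) \<le> dim B R' C'"
    by (rule small_flat_cover[OF cm C'(1)])
  have count: "card (\<Union>F\<in>\<F>. Rsub R' F) = card (\<Union>F\<in>\<F>. Rsub R (g ` F))"
    using iso_card_Union_Rsub[OF cB cA g V(3)] \<F> by blast
  have "\<forall>F\<in>\<F>. g ` F \<subseteq> g ` V \<and> dim A R (g ` F) < dim A R C"
  proof
    fix F assume F: "F \<in> \<F>"
    hence "F \<subseteq> B" using \<F> unfolding pg_flat_def by blast
    thus "g ` F \<subseteq> g ` V \<and> dim A R (g ` F) < dim A R C"
      using iso_dim[OF cB cA g] F \<F> assms(1,6) by fastforce
  qed
  moreover have "C \<subseteq> g ` V" "g ` V \<subseteq> A" using C'(2) V(1,2) gB by auto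
  ultimately have "dim A R C \<le> int (card (g ` V)) - int (card (\<Union>F\<in>\<F>. Rsub R (g ` F))) - 1"
    using relation_outside_family[OF cA \<open>C \<in> R\<close> _ _ V(3), of "g ` V" "\<lambda>F. g ` F"] by blast
  moreover have "card (g ` V) = card V" using card_image inj_on_subset[OF inj V(2)] by blast
  ultimately show False using bound count dimC' assms(6) by linarith
qed

end
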